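(* Let $f_1,\dots,f_n:\mathbb{R}^d\to\mathbb{R}$ be convex with each $f_i$ being $L_i$-smooth, let $f = \frac{1}{n}\sum_i f_i$ and let $x^*$ be a minimizer of $f$. Let $\mathcal{C}_1,\dots,\mathcal{C}_n$ be independent randomized compression operators with $\mathcal{C}_i\in\mathbb{B}^d(\omega_i)$, and let $\beta_i\in(0, \frac{1}{\omega_i+1}]$ for each $i$. For points $x^k, h_1^k,\dots,h_n^k$ define $h_i^{k+1} = h_i^k + \beta_i\mathcal{C}_i(\nabla f_i(x^k) - h_i^k)$ and $\sigma_k^2 = \frac{1}{n}\sum_{i=1}^n\omega_i\|h_i^k - \nabla f_i(x^* )\|^2$ (and analogously $\sigma_{k+1}^2$ with $h_i^{k+1}$). Then \[ \mathbb{E}\,\sigma_{k+1}^2 \leq (1 - \min_i\beta_i)\sigma_k^2 + 2\max_i\{\beta_i\omega_iL_i\}\,D_f(x^k,x^* ), \] where the expectation is over the compressors.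
   Context: A (random) operator $\mathcal{C}$ belongs to $\mathbb{B}^d(\omega)$ if $\mathbb{E}[\mathcal{C}(x)] = x$ and $\mathbb{E}\|\mathcal{C}(x)-x\|^2\leq\omega\|x\|^2$ for all $x$. The Bregman divergence is $D_f(x,y) = f(x)-f(y)-\langle\nabla f(y),x-y\rangle$. A differentiable $g$ is $L$-smooth if $\|\nabla g(x)-\nabla g(y)\|\leq L\|x-y\|$ for all $x,y$. *)

theory Defs
  imports "HOL-Probability.Probability"
begin

text \<open>Unbiased compressor class B^d(omega): a random operator C given as a function of the
  sample point s of the probability space M.\<close>
definition unbiased_compressor :: "'s measure \<Rightarrow> real \<Rightarrow> ('s \<Rightarrow> 'a::euclidean_space \<Rightarrow> 'a) \<Rightarrow> bool" where
  "unbiased_compressor M \<omega> C \<longleftrightarrow>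
     (\<forall>x. integrable M (\<lambda>s. C s x) \<and> (\<integral>s. C s x \<partial>M) = x \<and>
          integrable M (\<lambda>s. (norm (C s x - x))\<^sup>2) \<and>
          (\<integral>s. (norm (C s x - x))\<^sup>2 \<partial>M) \<le> \<omega> * (norm x)\<^sup>2)"

definition bregman :: "('a::real_inner \<Rightarrow> real) \<Rightarrow> ('a \<Rightarrow> 'a) \<Rightarrow> 'a \<Rightarrow> 'a \<Rightarrow> real" where
  "bregman f gf x y = f x - f y - inner (gf y) (x - y)"

definition L_smooth :: "('a::real_inner \<Rightarrow> real) \<Rightarrow> ('a \<Rightarrow> 'a) \<Rightarrow> real \<Rightarrow> bool" where
  "L_smooth g gg L \<longleftrightarrow>
     (\<forall>x. (g has_derivative (\<lambda>h. inner (gg x) h)) (at x)) \<and>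
     (\<forall>x y. norm (gg x - gg y) \<le> L * norm (x - y))"

end

theory Submission imports Defs begin

text \<open>
  Fix a node and put \<open>a = h - \<nabla>f(x\<^sup>*)\<close>, \<open>d = \<nabla>f(x\<^sup>k) - h\<close>. The compression error of \<open>d\<close>
  is centred, so the new shift \<open>h + \<beta> C(d)\<close> has expected squared distance from \<open>\<nabla>f(x\<^sup>*)\<close>
  at most \<open>\<parallel>a + \<beta> d\<parallel>\<^sup>2 + \<beta>\<^sup>2 \<omega> \<parallel>d\<parallel>\<^sup>2\<close>, and \<open>\<beta> (\<omega> + 1) \<le> 1\<close> bounds this by the
  convex combination \<open>(1 - \<beta>) \<parallel>a\<parallel>\<^sup>2 + \<beta> \<parallel>a + d\<parallel>\<^sup>2\<close>. Here \<open>a + d = \<nabla>f(x\<^sup>k) - \<nabla>f(x\<^sup>*)\<close>, and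
  co-coercivity of the gradient of a convex \<open>L\<close>-smooth function gives
  \<open>\<parallel>\<nabla>f(x\<^sup>k) - \<nabla>f(x\<^sup>*)\<parallel>\<^sup>2 \<le> 2 L D\<^sub>f(x\<^sup>k, x\<^sup>*)\<close>. Weighting by \<open>\<omega>\<close>, averaging over the nodes and
  using that the Bregman divergence is linear in the function yields the bound.
\<close>

lemma has_real_derivative_along_line:
  fixes g :: "'a::real_inner \<Rightarrow> real"
  assumes "\<And>z. (g has_derivative (\<lambda>h. inner (gg z) h)) (at z)"
  shows "((\<lambda>t. g (x + t *\<^sub>R d)) has_real_derivative inner (gg (x + t *\<^sub>R d)) d) (at t)"
proof -
  have "((\<lambda>t. x + t *\<^sub>R d) has_derivative (\<lambda>h. h *\<^sub>R d)) (at t)"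
    by (auto intro!: derivative_eq_intros)
  from diff_chain_at[OF this assms]
  have "((\<lambda>t. g (x + t *\<^sub>R d)) has_derivative (\<lambda>h. inner (gg (x + t *\<^sub>R d)) (h *\<^sub>R d))) (at t)"
    by (simp add: o_def)
  then show ?thesis
    unfolding has_field_derivative_def by (rule has_derivative_eq_rhs) (auto simp: fun_eq_iff)
qed

lemma convex_on_along_line:
  assumes "convex_on UNIV g"
  shows "convex_on UNIV (\<lambda>t. g (x + t *\<^sub>R d))"
proof (rule convex_onI)
  fix t a b :: real
  assume "0 < t" "t < 1"
  have "x + ((1 - t) * a + t * b) *\<^sub>R d = (1 - t) *\<^sub>R (x + a *\<^sub>R d) + t *\<^sub>R (x + b *\<^sub>R d)"
    by (simp add: algebra_simps)
  then show "g (x + ((1 - t) *\<^sub>R a + t *\<^sub>R b) *\<^sub>R d) \<le> (1 - t) * g (x + a *\<^sub>R d) + t * g (x + b *\<^sub>R d)"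
    using convex_onD[OF assms, of t "x + a *\<^sub>R d" "x + b *\<^sub>R d"] \<open>0 < t\<close> \<open>t < 1\<close> by simp
qed simp

lemma convex_on_gradient_inequality:
  fixes g :: "'a::real_inner \<Rightarrow> real"
  assumes "convex_on UNIV g" and "\<And>z. (g has_derivative (\<lambda>h. inner (gg z) h)) (at z)"
  shows "g y + inner (gg y) (x - y) \<le> g x"
proof -
  have "inner (gg (y + 0 *\<^sub>R (x - y))) (x - y) * (1 - 0) \<le> g (y + 1 *\<^sub>R (x - y)) - g (y + 0 *\<^sub>R (x - y))"
    by (rule convex_on_imp_above_tangent[OF convex_on_along_line[OF assms(1)]])
      (use has_real_derivative_along_line[OF assms(2), of y "x - y" 0] in auto)
  then show ?thesis by simp
qed

lemma bregman_nonneg: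
  fixes g :: "'a::real_inner \<Rightarrow> real"
  assumes "convex_on UNIV g" and "\<And>z. (g has_derivative (\<lambda>h. inner (gg z) h)) (at z)"
  shows "0 \<le> bregman g gg x y"
  using convex_on_gradient_inequality[OF assms, of y x] by (simp add: bregman_def)

lemma L_smooth_descent:
  fixes g :: "'a::real_inner \<Rightarrow> real"
  assumes "L_smooth g gg L"
  shows "g y \<le> g x + inner (gg x) (y - x) + L / 2 * (norm (y - x))\<^sup>2"
proof -
  define d where "d = y - x"
  define \<phi> where "\<phi> t = g (x + t *\<^sub>R d) - t * inner (gg x) d - L / 2 * t\<^sup>2 * (norm d)\<^sup>2" for t
  have deriv: "\<And>z. (g has_derivative (\<lambda>h. inner (gg z) h)) (at z)"
    and lip: "\<And>a b. norm (gg a - gg b) \<le> L * norm (a - b)"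
    using assms unfolding L_smooth_def by auto
  have "\<phi> 1 \<le> \<phi> 0"
  proof (rule DERIV_nonpos_imp_nonincreasing[of 0 1 \<phi>])
    fix t :: real
    assume "0 \<le> t" "t \<le> 1"
    have "inner (gg (x + t *\<^sub>R d)) d - inner (gg x) d = inner (gg (x + t *\<^sub>R d) - gg x) d"
      by (simp add: inner_diff_left)
    also have "\<dots> \<le> norm (gg (x + t *\<^sub>R d) - gg x) * norm d"
      by (rule norm_cauchy_schwarz)
    also have "\<dots> \<le> L * norm (t *\<^sub>R d) * norm d"
      using lip[of "x + t *\<^sub>R d" x] by (simp add: mult_right_mono)
    also have "\<dots> = L * t * (norm d)\<^sup>2"
      using \<open>0 \<le> t\<close> by (simp add: power2_eq_square)
    finally have "inner (gg (x + t *\<^sub>R d)) d - inner (gg x) d - L / 2 * (2 * t) * (norm d)\<^sup>2 \<le> 0"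
      by simp
    moreover have "DERIV \<phi> t :> inner (gg (x + t *\<^sub>R d)) d - inner (gg x) d - L / 2 * (2 * t) * (norm d)\<^sup>2"
      unfolding \<phi>_def by (auto intro!: derivative_eq_intros has_real_derivative_along_line[OF deriv])
    ultimately show "\<exists>y. DERIV \<phi> t :> y \<and> y \<le> 0" by blast
  qed simp
  then show ?thesis by (simp add: \<phi>_def d_def)
qed

lemma L_smooth_cocoercive:
  fixes g :: "'a::real_inner \<Rightarrow> real"
  assumes convex: "convex_on UNIV g" and smooth: "L_smooth g gg L"
  shows "(norm (gg x - gg y))\<^sup>2 \<le> 2 * L * bregman g gg x y"
proof -
  have deriv: "\<And>z. (g has_derivative (\<lambda>h. inner (gg z) h)) (at z)"
    and lip: "norm (gg x - gg y) \<le> L * norm (x - y)"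
    using smooth unfolding L_smooth_def by auto
  have nonneg: "0 \<le> bregman g gg x y"
    by (rule bregman_nonneg[OF convex deriv])
  define G where "G = gg x - gg y"
  consider "x = y" | "x \<noteq> y" "G = 0" | "G \<noteq> 0" by blast
  then show ?thesis
  proof cases
    case 1
    then show ?thesis by (simp add: bregman_def)
  next
    case 2
    have "0 \<le> L * norm (x - y)" using lip norm_ge_zero order_trans by blast
    then have "0 \<le> L" using \<open>x \<noteq> y\<close> by (simp add: zero_le_mult_iff)
    then show ?thesis using \<open>G = 0\<close> nonneg by (simp add: G_def)
  next
    case 3
    then have "0 < norm G" by simp
    also have "norm G \<le> L * norm (x - y)" using lip by (simp add: G_def)
    finally have "0 < L * norm (x - y)" .
    then have "0 < L" by (simp add: zero_less_mult_iff)
    \<comment> \<open>Compare the tangent plane at \<open>y\<close> with the quadratic upper bound at \<open>x\<close> in the point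
      \<open>w\<close> that minimises the latter minus the former.\<close>
    define w where "w = x - (1 / L) *\<^sub>R G"
    have "g y + inner (gg y) (w - y) \<le> g w"
      by (rule convex_on_gradient_inequality[OF convex deriv])
    moreover have "g w \<le> g x + inner (gg x) (w - x) + L / 2 * (norm (w - x))\<^sup>2"
      by (rule L_smooth_descent[OF smooth])
    moreover have "inner (gg y) (w - y) = inner (gg y) (x - y) + inner (gg y) (w - x)"
      by (simp add: inner_diff_right)
    moreover have "inner (gg x) (w - x) - inner (gg y) (w - x) = - (1 / L) * (norm G)\<^sup>2"
      by (simp add: w_def G_def inner_diff_left power2_norm_eq_inner algebra_simps)
    moreover have "L / 2 * (norm (w - x))\<^sup>2 = (1 / (2 * L)) * (norm G)\<^sup>2"
      using \<open>0 < L\<close> by (simp add: w_def power2_eq_square field_simps)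
    moreover have "(1 / L) * (norm G)\<^sup>2 = 2 * ((1 / (2 * L)) * (norm G)\<^sup>2)"
      by simp
    ultimately have "(1 / (2 * L)) * (norm G)\<^sup>2 \<le> bregman g gg x y"
      unfolding bregman_def by linarith
    then show ?thesis using \<open>0 < L\<close> by (simp add: G_def field_simps)
  qed
qed

lemma bregman_scaled_sum:
  fixes f :: "'i \<Rightarrow> 'a::real_inner \<Rightarrow> real"
  shows "bregman (\<lambda>x. c * (\<Sum>i\<in>I. f i x)) (\<lambda>x. c *\<^sub>R (\<Sum>i\<in>I. gf i x)) x y
         = c * (\<Sum>i\<in>I. bregman (f i) (gf i) x y)"
  unfolding bregman_def
  by (simp add: inner_sum_left sum_subtractf right_diff_distrib)

lemma unbiased_compressor_nonneg:
  fixes C :: "'s \<Rightarrow> 'a::euclidean_space \<Rightarrow> 'a"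
  assumes "prob_space M" and "unbiased_compressor M \<omega> C"
  shows "0 \<le> \<omega>"
proof -
  obtain b :: 'a where "b \<in> Basis" using nonempty_Basis by blast
  then have "norm b = 1" by simp
  have "0 \<le> (\<integral>s. (norm (C s b - b))\<^sup>2 \<partial>M)"
    by (rule integral_nonneg_AE) auto
  also have "\<dots> \<le> \<omega> * (norm b)\<^sup>2"
    using assms(2) unfolding unbiased_compressor_def by blast
  finally show ?thesis using \<open>norm b = 1\<close> by simp
qed

lemma expectation_norm_sq_add_centered:
  fixes Y :: "'s \<Rightarrow> 'a::euclidean_space"
  assumes "prob_space M"
    and Y: "integrable M Y" "(\<integral>s. Y s \<partial>M) = 0"
    and Y2: "integrable M (\<lambda>s. (norm (Y s))\<^sup>2)"
  shows "integrable M (\<lambda>s. (norm (c + Y s))\<^sup>2)"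
    and "(\<integral>s. (norm (c + Y s))\<^sup>2 \<partial>M) = (norm c)\<^sup>2 + (\<integral>s. (norm (Y s))\<^sup>2 \<partial>M)"
proof -
  interpret prob_space M by fact
  have expand: "(norm (c + Y s))\<^sup>2 = (norm c)\<^sup>2 + 2 * inner c (Y s) + (norm (Y s))\<^sup>2" for s
    by (simp add: power2_norm_eq_inner inner_add_left inner_add_right inner_commute)
  show "integrable M (\<lambda>s. (norm (c + Y s))\<^sup>2)"
    unfolding expand using Y Y2 by auto
  show "(\<integral>s. (norm (c + Y s))\<^sup>2 \<partial>M) = (norm c)\<^sup>2 + (\<integral>s. (norm (Y s))\<^sup>2 \<partial>M)"
    unfolding expand using Y Y2 by (simp add: prob_space)
qed

lemma norm_sq_partial_step_le:
  fixes a d :: "'a::real_inner"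
  assumes "0 \<le> \<beta>" and "\<beta> * (\<omega> + 1) \<le> 1"
  shows "(norm (a + \<beta> *\<^sub>R d))\<^sup>2 + \<beta>\<^sup>2 * \<omega> * (norm d)\<^sup>2
         \<le> (1 - \<beta>) * (norm a)\<^sup>2 + \<beta> * (norm (a + d))\<^sup>2"
proof -
  have "(norm (a + \<beta> *\<^sub>R d))\<^sup>2
        = (1 - \<beta>) * (norm a)\<^sup>2 + \<beta> * (norm (a + d))\<^sup>2 - \<beta> * (1 - \<beta>) * (norm d)\<^sup>2"
    by (simp only: power2_norm_eq_inner)
      (simp add: inner_add_left inner_add_right inner_commute algebra_simps power2_eq_square)
  moreover have "0 \<le> \<beta> * (1 - \<beta> * (\<omega> + 1)) * (norm d)\<^sup>2"
    using assms by simp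
  ultimately show ?thesis by (simp add: algebra_simps power2_eq_square)
qed

lemma unbiased_compressor_step:
  assumes M: "prob_space M" and comp: "unbiased_compressor M \<omega> C"
    and "0 < \<beta>" and "\<beta> \<le> 1 / (\<omega> + 1)"
  shows "integrable M (\<lambda>s. (norm (h + \<beta> *\<^sub>R C s (v - h) - u))\<^sup>2)"
    and "(\<integral>s. (norm (h + \<beta> *\<^sub>R C s (v - h) - u))\<^sup>2 \<partial>M)
         \<le> (1 - \<beta>) * (norm (h - u))\<^sup>2 + \<beta> * (norm (v - u))\<^sup>2"
proof -
  interpret prob_space M by fact
  define d where "d = v - h"
  define Y where "Y = (\<lambda>s. \<beta> *\<^sub>R (C s d - d))"
  have "integrable M (\<lambda>s. C s d)" and "(\<integral>s. C s d \<partial>M) = d"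
    and "integrable M (\<lambda>s. (norm (C s d - d))\<^sup>2)"
    and var: "(\<integral>s. (norm (C s d - d))\<^sup>2 \<partial>M) \<le> \<omega> * (norm d)\<^sup>2"
    using comp unfolding unbiased_compressor_def by auto
  then have Y: "integrable M Y" "(\<integral>s. Y s \<partial>M) = 0" "integrable M (\<lambda>s. (norm (Y s))\<^sup>2)"
    by (auto simp: Y_def prob_space power_mult_distrib)
  have shift: "h + \<beta> *\<^sub>R C s (v - h) - u = ((h - u) + \<beta> *\<^sub>R d) + Y s" for s
    by (simp add: Y_def d_def algebra_simps)
  show "integrable M (\<lambda>s. (norm (h + \<beta> *\<^sub>R C s (v - h) - u))\<^sup>2)"
    unfolding shift by (rule expectation_norm_sq_add_centered(1)[OF M Y])
  have "\<beta> * (\<omega> + 1) \<le> 1"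
    using \<open>0 < \<beta>\<close> \<open>\<beta> \<le> 1 / (\<omega> + 1)\<close> unbiased_compressor_nonneg[OF M comp]
    by (simp add: field_simps)
  have "(\<integral>s. (norm (h + \<beta> *\<^sub>R C s (v - h) - u))\<^sup>2 \<partial>M)
        = (norm ((h - u) + \<beta> *\<^sub>R d))\<^sup>2 + \<beta>\<^sup>2 * (\<integral>s. (norm (C s d - d))\<^sup>2 \<partial>M)"
    unfolding shift expectation_norm_sq_add_centered(2)[OF M Y]
    by (simp add: Y_def power_mult_distrib)
  also have "\<dots> \<le> (norm ((h - u) + \<beta> *\<^sub>R d))\<^sup>2 + \<beta>\<^sup>2 * \<omega> * (norm d)\<^sup>2"
    using mult_left_mono[OF var zero_le_power2[of \<beta>]] by simp
  also have "\<dots> \<le> (1 - \<beta>) * (norm (h - u))\<^sup>2 + \<beta> * (norm (v - u))\<^sup>2"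
    using norm_sq_partial_step_le[OF _ \<open>\<beta> * (\<omega> + 1) \<le> 1\<close>, of "h - u" d] \<open>0 < \<beta>\<close>
    by (simp add: d_def)
  finally show "(\<integral>s. (norm (h + \<beta> *\<^sub>R C s (v - h) - u))\<^sup>2 \<partial>M)
                \<le> (1 - \<beta>) * (norm (h - u))\<^sup>2 + \<beta> * (norm (v - u))\<^sup>2" .
qed

lemma compressed_shift_error_le:
  assumes M: "prob_space M" and comp: "unbiased_compressor M \<omega> C"
    and \<beta>: "0 < \<beta>" "\<beta> \<le> 1 / (\<omega> + 1)"
    and convex: "convex_on UNIV g" and smooth: "L_smooth g gg L"
  shows "\<omega> * (\<integral>s. (norm (h + \<beta> *\<^sub>R C s (gg x - h) - gg y))\<^sup>2 \<partial>M)
         \<le> (1 - \<beta>) * (\<omega> * (norm (h - gg y))\<^sup>2) + 2 * (\<beta> * \<omega> * L) * bregman g gg x y"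
proof -
  have "0 \<le> \<omega>" by (rule unbiased_compressor_nonneg[OF M comp])
  have "(\<integral>s. (norm (h + \<beta> *\<^sub>R C s (gg x - h) - gg y))\<^sup>2 \<partial>M)
        \<le> (1 - \<beta>) * (norm (h - gg y))\<^sup>2 + \<beta> * (norm (gg x - gg y))\<^sup>2"
    by (rule unbiased_compressor_step(2)[OF M comp \<beta>])
  also have "\<dots> \<le> (1 - \<beta>) * (norm (h - gg y))\<^sup>2 + \<beta> * (2 * L * bregman g gg x y)"
    using L_smooth_cocoercive[OF convex smooth, of x y] \<open>0 < \<beta>\<close> by simp
  finally have "\<omega> * (\<integral>s. (norm (h + \<beta> *\<^sub>R C s (gg x - h) - gg y))\<^sup>2 \<partial>M)
      \<le> \<omega> * ((1 - \<beta>) * (norm (h - gg y))\<^sup>2 + \<beta> * (2 * L * bregman g gg x y))"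
    by (rule mult_left_mono) (rule \<open>0 \<le> \<omega>\<close>)
  then show ?thesis by (simp add: algebra_simps)
qed

theorem lemma4:
  fixes M :: "'s measure"
    and n :: nat
    and f :: "nat \<Rightarrow> 'a::euclidean_space \<Rightarrow> real"
    and gradf :: "nat \<Rightarrow> 'a \<Rightarrow> 'a"
    and L \<omega> \<beta> :: "nat \<Rightarrow> real"
    and C :: "nat \<Rightarrow> 's \<Rightarrow> 'a \<Rightarrow> 'a"
    and xstar xk :: 'a
    and hk :: "nat \<Rightarrow> 'a"
  assumes M: "prob_space M"
    and n: "n \<ge> 1"
    and conv: "\<And>i. i < n \<Longrightarrow> convex_on UNIV (f i)"
    and smooth: "\<And>i. i < n \<Longrightarrow> L_smooth (f i) (gradf i) (L i)"
    and minim: "\<And>y. (1 / real n) * (\<Sum>i<n. f i xstar) \<le> (1 / real n) * (\<Sum>i<n. f i y)"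
    and comp: "\<And>i. i < n \<Longrightarrow> unbiased_compressor M (\<omega> i) (C i)"
    and indep: "prob_space.indep_vars M (\<lambda>_. Pi\<^sub>M UNIV (\<lambda>_. borel)) C {..<n}"
    and beta: "\<And>i. i < n \<Longrightarrow> 0 < \<beta> i \<and> \<beta> i \<le> 1 / (\<omega> i + 1)"
  shows "(\<integral>s. (1 / real n) * (\<Sum>i<n. \<omega> i *
             (norm (hk i + \<beta> i *\<^sub>R C i s (gradf i xk - hk i) - gradf i xstar))\<^sup>2) \<partial>M)
         \<le> (1 - Min (\<beta> ` {..<n})) * ((1 / real n) * (\<Sum>i<n. \<omega> i * (norm (hk i - gradf i xstar))\<^sup>2))
           + 2 * Max ((\<lambda>i. \<beta> i * \<omega> i * L i) ` {..<n})
               * bregman (\<lambda>x. (1 / real n) * (\<Sum>i<n. f i x))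
                         (\<lambda>x. (1 / real n) *\<^sub>R (\<Sum>i<n. gradf i x)) xk xstar"
proof -
  define X where "X i s = (norm (hk i + \<beta> i *\<^sub>R C i s (gradf i xk - hk i) - gradf i xstar))\<^sup>2" for i s
  define A where "A i = \<omega> i * (norm (hk i - gradf i xstar))\<^sup>2" for i
  define D where "D i = bregman (f i) (gradf i) xk xstar" for i
  define \<beta>\<^sub>m\<^sub>i\<^sub>n where "\<beta>\<^sub>m\<^sub>i\<^sub>n = Min (\<beta> ` {..<n})"
  define K where "K = Max ((\<lambda>i. \<beta> i * \<omega> i * L i) ` {..<n})"
  have node: "\<omega> i * (\<integral>s. X i s \<partial>M) \<le> (1 - \<beta>\<^sub>m\<^sub>i\<^sub>n) * A i + 2 * K * D i" if "i < n" for i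
  proof -
    have "\<omega> i * (\<integral>s. X i s \<partial>M) \<le> (1 - \<beta> i) * A i + 2 * (\<beta> i * \<omega> i * L i) * D i"
      unfolding X_def A_def D_def
      using compressed_shift_error_le[OF M comp[OF that] _ _ conv[OF that] smooth[OF that]] beta[OF that]
      by blast
    moreover have "(1 - \<beta> i) * A i \<le> (1 - \<beta>\<^sub>m\<^sub>i\<^sub>n) * A i"
      using that unbiased_compressor_nonneg[OF M comp[OF that]]
      by (intro mult_right_mono) (auto simp: A_def \<beta>\<^sub>m\<^sub>i\<^sub>n_def)
    moreover have "2 * (\<beta> i * \<omega> i * L i) * D i \<le> 2 * K * D i"
      using that smooth[OF that]
      by (intro mult_right_mono) (auto simp: D_def K_def L_smooth_def intro!: bregman_nonneg conv)
    ultimately show ?thesis by linarith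
  qed
  have "(\<integral>s. (1 / real n) * (\<Sum>i<n. \<omega> i * X i s) \<partial>M) = (1 / real n) * (\<Sum>i<n. \<omega> i * (\<integral>s. X i s \<partial>M))"
    using unbiased_compressor_step(1)[OF M comp] beta by (simp add: X_def integral_sum)
  also have "\<dots> \<le> (1 / real n) * (\<Sum>i<n. (1 - \<beta>\<^sub>m\<^sub>i\<^sub>n) * A i + 2 * K * D i)"
    using node by (intro mult_left_mono sum_mono) auto
  also have "\<dots> = (1 - \<beta>\<^sub>m\<^sub>i\<^sub>n) * ((1 / real n) * (\<Sum>i<n. A i)) + 2 * K * ((1 / real n) * (\<Sum>i<n. D i))"
    by (simp only: sum.distrib sum_distrib_left[symmetric] distrib_left mult.left_commute[of "1 / real n"])
  finally show ?thesis
    unfolding X_def A_def D_def \<beta>\<^sub>m\<^sub>i\<^sub>n_def K_def bregman_scaled_sum .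
qed

end
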